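(* Let $\Omega \subset \mathbb R\times\mathbb R^d$ be any set and $u:\Omega\to\mathbb R$ a function which at every point of $\Omega$ is twice differentiable in $x$ and differentiable in $t$. The following are equivalent: (1) There exist constants $0<\lambda\le\Lambda$ and a function $F$ on symmetric $d\times d$ matrices, uniformly elliptic with constants $\lambda,\Lambda$, such that $u_t = F(D^2u)$ at every point of $\Omega$. (2) There exists a constant $C\ge1$ such that for all pairs of points $(t,x),(s,y)\in\Omega$, writing $a = u_t(t,x)-u_t(s,y)$ and $M = D^2u(t,x)-D^2u(s,y)$, $$N := a_- + \operatorname{tr} M_+,\qquad D := a_+ + \operatorname{tr} M_-,$$ one has $C^{-1} D \le N \le C D$ (i.e. $C^{-1}\le N/D\le C$ whenever $D\neq0$).
   Context: A function $F$ on real symmetric $d\times d$ matrices is uniformly elliptic with constants $0<\lambda\le\Lambda$ if for all symmetric $A,B$ with $B \ge 0$, $\lambda \operatorname{tr} B \le F(A+B) - F(A) \le \Lambda \operatorname{tr} B$. For a real number $a$, $a_+=\max(a,0)$ and $a_- = \max(-a,0)$; for a symmetric matrix $M$, $M = M_+ - M_-$ with $M_\pm$ positive semidefinite with orthogonal ranges. *)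

theory Defs
  imports "HOL-Analysis.Analysis"
begin

type_synonym 'n smat = "real^'n^'n"

definition sym_mat :: "real^'n^'n \<Rightarrow> bool" where
  "sym_mat M \<longleftrightarrow> transpose M = M"

definition psd :: "real^'n^'n \<Rightarrow> bool" where
  "psd M \<longleftrightarrow> sym_mat M \<and> (\<forall>v. 0 \<le> v \<bullet> (M *v v))"

definition uniformly_elliptic :: "(real^'n^'n \<Rightarrow> real) \<Rightarrow> real \<Rightarrow> real \<Rightarrow> bool" where
  "uniformly_elliptic F lam Lam \<longleftrightarrow>
     (\<forall>A B. sym_mat A \<and> psd B \<longrightarrow>
        lam * trace B \<le> F (A + B) - F A \<and> F (A + B) - F A \<le> Lam * trace B)"

text \<open>Decomposition M = P - Q with P, Q positive semidefinite with orthogonal ranges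
  (for symmetric P, Q: range P orthogonal to range Q iff P ** Q = 0).\<close>
definition pn_decomp :: "real^'n^'n \<Rightarrow> real^'n^'n \<Rightarrow> real^'n^'n \<Rightarrow> bool" where
  "pn_decomp M P Q \<longleftrightarrow> psd P \<and> psd Q \<and> M = P - Q \<and> P ** Q = mat 0"

definition mat_pos :: "real^'n^'n \<Rightarrow> real^'n^'n" where
  "mat_pos M = (THE P. \<exists>Q. pn_decomp M P Q)"

definition mat_neg :: "real^'n^'n \<Rightarrow> real^'n^'n" where
  "mat_neg M = (THE Q. \<exists>P. pn_decomp M P Q)"

definition pos_part :: "real \<Rightarrow> real" where "pos_part a = max a 0"
definition neg_part :: "real \<Rightarrow> real" where "neg_part a = max (- a) 0"

definition grad :: "(real^'n \<Rightarrow> real) \<Rightarrow> real^'n \<Rightarrow> real^'n" where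
  "grad f y = (\<chi> i. frechet_derivative f (at y) (axis i 1))"

definition twice_differentiable_at :: "(real^'n \<Rightarrow> real) \<Rightarrow> real^'n \<Rightarrow> bool" where
  "twice_differentiable_at f x \<longleftrightarrow>
     (\<forall>\<^sub>F y in nhds x. f differentiable (at y)) \<and> grad f differentiable (at x)"

definition hessian :: "(real^'n \<Rightarrow> real) \<Rightarrow> real^'n \<Rightarrow> real^'n^'n" where
  "hessian f x = matrix (frechet_derivative (grad f) (at x))"

definition time_deriv :: "(real \<Rightarrow> real^'n \<Rightarrow> real) \<Rightarrow> real \<Rightarrow> real^'n \<Rightarrow> real" where
  "time_deriv u t x = deriv (\<lambda>s. u s x) t"

definition space_hessian :: "(real \<Rightarrow> real^'n \<Rightarrow> real) \<Rightarrow> real \<Rightarrow> real^'n \<Rightarrow> real^'n^'n" where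
  "space_hessian u t x = hessian (\<lambda>y. u t y) x"

end

theory Submission
  imports Defs
begin

text \<open>If \<open>u\<^sub>t = F(D\<^sup>2u)\<close> with \<open>F\<close> elliptic, write the difference of two Hessians as
  \<open>M = M\<^sub>+ - M\<^sub>-\<close>: both Hessians arise from a common matrix by adding \<open>M\<^sub>+\<close> resp. \<open>M\<^sub>-\<close>, so
  \<open>\<lambda> tr M\<^sub>+ - \<Lambda> tr M\<^sub>- \<le> a \<le> \<Lambda> tr M\<^sub>+ - \<lambda> tr M\<^sub>-\<close>, which bounds \<open>N/D\<close> above and below.
  Conversely the ratio bound says \<open>a \<le> P(M)\<close> for every pair of points, where
  \<open>P(M) = C tr M\<^sub>+ - C\<^sup>-\<^sup>1 tr M\<^sub>-\<close> is the Pucci maximal operator. Since \<open>tr M\<^sub>+\<close> is the maximum of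
  \<open>tr (A M)\<close> over \<open>0 \<le> A \<le> I\<close>, \<open>P\<close> is subadditive and elliptic, so the inf-convolution
  \<open>F(X) = inf\<^sub>p (u\<^sub>t(p) + P(X - D\<^sup>2u(p)))\<close> is an elliptic function taking the prescribed values.
  Symmetry of the Hessian (Schwarz's theorem) is what makes \<open>M\<^sub>\<plusminus>\<close> meaningful.\<close>

section \<open>Spectral theorem for symmetric matrices\<close>

definition diag_mat :: "real^'n \<Rightarrow> real^'n^'n" where
  "diag_mat d = (\<chi> i j. if i = j then d$i else 0)"

lemma sym_mat_inner_commute: "sym_mat M \<Longrightarrow> x \<bullet> (M *v y) = (M *v x) \<bullet> y"
  unfolding sym_mat_def by (metis dot_lmul_matrix transpose_matrix_vector)

lemma sym_mat_add: "sym_mat A \<Longrightarrow> sym_mat B \<Longrightarrow> sym_mat (A + B)"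
  by (simp add: sym_mat_def transpose_def vec_eq_iff)

lemma sym_mat_diff: "sym_mat A \<Longrightarrow> sym_mat B \<Longrightarrow> sym_mat (A - B)"
  by (simp add: sym_mat_def transpose_def vec_eq_iff)

lemma psd_imp_sym_mat: "psd B \<Longrightarrow> sym_mat B"
  by (simp add: psd_def)

lemma quadratic_form_le_max_on_sphere:
  fixes M :: "real^'n^'n"
  assumes V: "subspace V" and x: "x \<in> V" "norm x = 1"
    and max: "\<And>y. y \<in> V \<Longrightarrow> norm y = 1 \<Longrightarrow> y \<bullet> (M *v y) \<le> x \<bullet> (M *v x)"
    and z: "z \<in> V"
  shows "z \<bullet> (M *v z) \<le> (x \<bullet> (M *v x)) * (z \<bullet> z)"
proof (cases "z = 0")
  case False
  let ?n = "norm z"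
  have n: "?n > 0" using False by simp
  have "(z /\<^sub>R ?n) \<bullet> (M *v (z /\<^sub>R ?n)) \<le> x \<bullet> (M *v x)"
    using V z n by (intro max) (simp_all add: subspace_scale)
  moreover have "(z /\<^sub>R ?n) \<bullet> (M *v (z /\<^sub>R ?n)) = (z \<bullet> (M *v z)) / (?n * ?n)"
    by (simp add: matrix_vector_mult_scaleR field_simps)
  moreover have "z \<bullet> z = ?n * ?n" by (simp add: dot_square_norm power2_eq_square)
  ultimately show ?thesis using n by (simp add: divide_le_eq mult.commute)
qed simp

lemma linear_coeff_zero_if_quadratic_nonpos:
  fixes b c :: real
  assumes "\<And>t. 2 * t * b + t * t * c \<le> 0"
  shows "b = 0"
proof (rule ccontr)
  assume "b \<noteq> 0"
  define t where "t = b / (\<bar>c\<bar> + 1)"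
  have "t * (2 * b + t * c) \<le> 0" using assms[of t] by (simp add: algebra_simps)
  moreover have "0 < t * b"
  proof -
    have "0 < b * b" using \<open>b \<noteq> 0\<close> not_real_square_gt_zero by blast
    then show ?thesis unfolding t_def by (simp add: add_nonneg_pos)
  qed
  moreover have "\<bar>t * c\<bar> < \<bar>b\<bar>"
  proof -
    have "\<bar>t * c\<bar> = \<bar>b\<bar> * (\<bar>c\<bar> / (\<bar>c\<bar> + 1))" by (simp add: t_def abs_mult)
    also have "\<dots> < \<bar>b\<bar> * 1"
      using \<open>b \<noteq> 0\<close> by (intro mult_strict_left_mono) auto
    finally show ?thesis by simp
  qed
  ultimately show False
    by (smt (verit, ccfv_SIG) mult_le_0_iff zero_less_mult_iff)
qed

text \<open>Perturbing the maximiser \<open>x\<close> orthogonally shows that \<open>M x\<close> has no component orthogonal to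
  \<open>x\<close> within \<open>V\<close>.\<close>
lemma quadratic_form_max_on_sphere_orthogonal:
  fixes M :: "real^'n^'n"
  assumes sym: "sym_mat M" and V: "subspace V" and x: "x \<in> V" "norm x = 1"
    and max: "\<And>y. y \<in> V \<Longrightarrow> norm y = 1 \<Longrightarrow> y \<bullet> (M *v y) \<le> x \<bullet> (M *v x)"
    and y: "y \<in> V" "y \<bullet> x = 0"
  shows "y \<bullet> (M *v x) = 0"
proof (rule linear_coeff_zero_if_quadratic_nonpos)
  fix t :: real
  let ?m = "x \<bullet> (M *v x)"
  have xx: "x \<bullet> x = 1" using x(2) by (simp add: dot_square_norm)
  have "x + t *\<^sub>R y \<in> V" using x y V by (simp add: subspace_add subspace_scale)
  then have le: "(x + t *\<^sub>R y) \<bullet> (M *v (x + t *\<^sub>R y)) \<le> ?m * ((x + t *\<^sub>R y) \<bullet> (x + t *\<^sub>R y))"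
    using max by (intro quadratic_form_le_max_on_sphere[OF V x]) auto
  have "x \<bullet> (M *v y) = y \<bullet> (M *v x)"
    using sym_mat_inner_commute[OF sym, of x y] by (simp add: inner_commute)
  then have "(x + t *\<^sub>R y) \<bullet> (M *v (x + t *\<^sub>R y))
      = ?m + 2 * t * (y \<bullet> (M *v x)) + t * t * (y \<bullet> (M *v y))"
    by (simp add: matrix_vector_right_distrib matrix_vector_mult_scaleR inner_add_left
        inner_add_right algebra_simps)
  moreover have "(x + t *\<^sub>R y) \<bullet> (x + t *\<^sub>R y) = 1 + t * t * (y \<bullet> y)"
    using y(2) xx by (simp add: inner_add_left inner_add_right inner_commute[of x y] algebra_simps)
  ultimately have "?m + 2 * t * (y \<bullet> (M *v x)) + t * t * (y \<bullet> (M *v y)) \<le> ?m * (1 + t * t * (y \<bullet> y))"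
    using le by simp
  then show "2 * t * (y \<bullet> (M *v x)) + t * t * (y \<bullet> (M *v y) - ?m * (y \<bullet> y)) \<le> 0"
    by (simp add: algebra_simps)
qed

lemma sym_mat_invariant_subspace_has_eigenvector:
  fixes M :: "real^'n^'n"
  assumes sym: "sym_mat M" and V: "subspace V" and inv: "\<And>x. x \<in> V \<Longrightarrow> M *v x \<in> V"
    and nontrivial: "V \<noteq> {0}"
  obtains x c where "x \<in> V" "norm x = 1" "M *v x = c *\<^sub>R x"
proof -
  let ?K = "V \<inter> sphere 0 1"
  have compact: "compact ?K"
    by (metis V closed_subspace compact_sphere closed_Int_compact)
  have nonempty: "?K \<noteq> {}"
  proof -
    obtain v where v: "v \<in> V" "v \<noteq> 0" using nontrivial V subspace_0 by blast
    have "v /\<^sub>R norm v \<in> ?K" using v V by (simp add: subspace_scale)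
    then show ?thesis by blast
  qed
  have "continuous_on ?K (\<lambda>y. y \<bullet> (M *v y))"
    by (intro continuous_on_inner continuous_on_id matrix_vector_mult_linear_continuous_on)
  then obtain x where x: "x \<in> ?K" and max: "\<And>y. y \<in> ?K \<Longrightarrow> y \<bullet> (M *v y) \<le> x \<bullet> (M *v x)"
    using continuous_attains_sup[OF compact nonempty] by blast
  have xV: "x \<in> V" and nx: "norm x = 1" using x by auto
  note orth = quadratic_form_max_on_sphere_orthogonal[OF sym V xV nx]
  let ?m = "x \<bullet> (M *v x)"
  have xx: "x \<bullet> x = 1" using nx by (simp add: dot_square_norm)
  define w where "w = M *v x - ?m *\<^sub>R x"
  have "w \<in> V" unfolding w_def using inv[OF xV] xV V by (simp add: subspace_diff subspace_scale)
  moreover have wx: "w \<bullet> x = 0"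
    unfolding w_def using xx by (simp add: inner_diff_left inner_commute[of "M *v x" x])
  ultimately have "w \<bullet> (M *v x) = 0" using orth max by auto
  moreover have "w \<bullet> w = w \<bullet> (M *v x) - ?m * (w \<bullet> x)"
    by (subst (2) w_def) (simp add: inner_diff_right)
  ultimately have "w \<bullet> w = 0" using wx by simp
  then have "M *v x = ?m *\<^sub>R x" unfolding w_def by simp
  then show ?thesis using that xV nx by blast
qed

lemma sym_mat_orthonormal_eigenbasis:
  fixes M :: "real^'n^'n"
  assumes sym: "sym_mat M"
  shows "subspace V \<Longrightarrow> (\<And>x. x \<in> V \<Longrightarrow> M *v x \<in> V) \<Longrightarrow>
    \<exists>S. S \<subseteq> V \<and> pairwise orthogonal S \<and> (\<forall>x\<in>S. norm x = 1) \<and> span S = V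
       \<and> (\<forall>x\<in>S. \<exists>c. M *v x = c *\<^sub>R x)"
proof (induction "dim V" arbitrary: V rule: less_induct)
  case less
  show ?case
  proof (cases "V = {0}")
    case True
    then show ?thesis by (intro exI[of _ "{}"]) auto
  next
    case False
    obtain x c where x: "x \<in> V" "norm x = 1" "M *v x = c *\<^sub>R x"
      using sym_mat_invariant_subspace_has_eigenvector[OF sym less.prems False] by blast
    have xx: "x \<bullet> x = 1" using x(2) by (simp add: dot_square_norm)
    define W where "W = {y \<in> V. x \<bullet> y = 0}"
    have W: "subspace W"
      using less.prems(1) by (auto simp: W_def subspace_def inner_add_right)
    have W_invariant: "M *v y \<in> W" if "y \<in> W" for y
      using that less.prems(2) sym_mat_inner_commute[OF sym, of x y] x(3) by (simp add: W_def)
    have "W \<subset> V" using x(1) xx by (force simp: W_def)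
    then have "dim W < dim V"
      using dim_psubset W less.prems(1) by (metis span_eq_iff)
    then obtain S where S: "S \<subseteq> W" "pairwise orthogonal S" "\<forall>x\<in>S. norm x = 1" "span S = W"
      "\<forall>x\<in>S. \<exists>c. M *v x = c *\<^sub>R x"
      using less.hyps[OF _ W W_invariant] by blast
    have "V \<subseteq> span (insert x S)"
    proof
      fix y assume "y \<in> V"
      then have "y - (x \<bullet> y) *\<^sub>R x \<in> span S"
        using x(1) xx less.prems(1) S(4) by (simp add: W_def subspace_diff subspace_scale inner_diff_right)
      then have "y - (x \<bullet> y) *\<^sub>R x + (x \<bullet> y) *\<^sub>R x \<in> span (insert x S)"
        by (meson span_add span_base span_mono span_scale insertI1 subset_insertI subsetD)
      then show "y \<in> span (insert x S)" by simp
    qed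
    moreover have "span (insert x S) \<subseteq> V"
      using S(1) x(1) less.prems(1) by (intro span_minimal) (auto simp: W_def)
    moreover have "pairwise orthogonal (insert x S)"
      using S(1,2) by (auto simp: pairwise_insert W_def orthogonal_def inner_commute)
    ultimately show ?thesis
      using S x by (intro exI[of _ "insert x S"]) (auto simp: span_superset)
  qed
qed

lemma sym_mat_spectral:
  fixes M :: "real^'n^'n"
  assumes sym: "sym_mat M"
  obtains U d where "orthogonal_matrix U" "M = U ** diag_mat d ** transpose U"
proof -
  obtain S where S: "pairwise orthogonal S" "\<forall>x\<in>S. norm x = 1" "span S = UNIV"
       "\<forall>x\<in>S. \<exists>c. M *v x = c *\<^sub>R x"
    using sym_mat_orthonormal_eigenbasis[OF sym, of UNIV] by auto
  have "0 \<notin> S" using S(2) by force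
  then have indep: "independent S" using S(1) pairwise_orthogonal_independent by blast
  then have "card S = CARD('n)" "finite S"
    using dim_eq_card_independent[OF indep] S(3) dim_span[of S] finiteI_independent by auto
  then obtain f where f: "bij_betw f (UNIV::'n set) S"
    using finite_same_card_bij[of "UNIV::'n set" S] by auto
  then have fS: "f i \<in> S" for i using bij_betwE by blast
  define U where "U = (\<chi> i j. f j $ i)"
  have U: "orthogonal_matrix U"
    using S(1,2) f fS
    by (auto simp: U_def orthogonal_matrix_orthonormal_columns column_def pairwise_def
        bij_betw_def inj_on_def) metis
  define d where "d = (\<chi> j. SOME c. M *v f j = c *\<^sub>R f j)"
  have eigen: "M *v f j = (d $ j) *\<^sub>R f j" for j
    unfolding d_def using S(4) fS[of j] someI_ex[of "\<lambda>c. M *v f j = c *\<^sub>R f j"] by auto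
  have "M ** U = U ** diag_mat d"
  proof -
    have "(M ** U) $ i $ j = (M *v f j) $ i" for i j
      unfolding matrix_matrix_mult_def matrix_vector_mult_def U_def by simp
    then show ?thesis
      unfolding eigen by (simp add: matrix_matrix_mult_def diag_mat_def U_def vec_eq_iff mult.commute
          if_distrib[of "\<lambda>z. _ * z"] cong: if_cong)
  qed
  then have "M = U ** diag_mat d ** transpose U"
    using U by (metis matrix_mul_assoc matrix_mul_rid orthogonal_matrix_def)
  then show ?thesis using that U by blast
qed

section \<open>Positive and negative parts of a symmetric matrix\<close>

lemma diag_mat_mult: "diag_mat a ** diag_mat b = diag_mat (a * b)"
  unfolding diag_mat_def matrix_matrix_mult_def
  by (simp add: vec_eq_iff if_distrib[of "\<lambda>z. _ * z"] sum.delta cong: if_cong)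

lemma diag_mat_diff: "diag_mat a - diag_mat b = diag_mat (a - b)"
  by (simp add: diag_mat_def vec_eq_iff)

lemma transpose_diag_mat [simp]: "transpose (diag_mat a) = diag_mat a"
  by (simp add: diag_mat_def transpose_def vec_eq_iff)

lemma diag_mat_mult_axis: "diag_mat d *v axis j 1 = d$j *\<^sub>R axis j 1"
  unfolding diag_mat_def matrix_vector_mult_def axis_def
  by (simp add: vec_eq_iff if_distrib[of "\<lambda>z. _ * z"] sum.delta cong: if_cong)

lemma trace_diag_mat: "trace (diag_mat a) = (\<Sum>j\<in>UNIV. a$j)"
  by (simp add: trace_def diag_mat_def)

lemma trace_mult_diag_mat: "trace (B ** diag_mat a) = (\<Sum>j\<in>UNIV. B$j$j * a$j)"
  unfolding trace_def diag_mat_def matrix_matrix_mult_def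
  by (simp add: if_distrib[of "\<lambda>z. _ * z"] sum.delta cong: if_cong)

lemma inner_matrix_vector_transpose: "x \<bullet> ((U::real^'n^'m) *v z) = (transpose U *v x) \<bullet> z"
  by (simp only: transpose_matrix_vector dot_lmul_matrix)

lemma orthogonal_matrix_transpose_mult: "orthogonal_matrix U \<Longrightarrow> transpose U ** U = mat 1"
  by (simp add: orthogonal_matrix_def)

lemma sym_mat_orthogonal_conj: "sym_mat ((U::real^'n^'n) ** diag_mat a ** transpose U)"
  unfolding sym_mat_def by (simp only: matrix_transpose_mul transpose_transpose transpose_diag_mat matrix_mul_assoc)

lemma quadratic_form_orthogonal_conj:
  "x \<bullet> (((U::real^'n^'n) ** diag_mat a ** transpose U) *v x) = (\<Sum>j\<in>UNIV. a$j * ((transpose U *v x)$j)^2)"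
proof -
  have "x \<bullet> ((U ** diag_mat a ** transpose U) *v x) = (transpose U *v x) \<bullet> (diag_mat a *v (transpose U *v x))"
    by (simp only: matrix_vector_mul_assoc[symmetric] matrix_mul_assoc[symmetric] inner_matrix_vector_transpose)
  also have "\<dots> = (\<Sum>j\<in>UNIV. a$j * ((transpose U *v x)$j)^2)"
    unfolding diag_mat_def matrix_vector_mult_def inner_vec_def
    by (simp add: if_distrib[of "\<lambda>z. z * _"] sum.delta power2_eq_square mult_ac cong: if_cong)
  finally show ?thesis .
qed

lemma psd_orthogonal_conj: "(\<And>j. 0 \<le> a$j) \<Longrightarrow> psd ((U::real^'n^'n) ** diag_mat a ** transpose U)"
  unfolding psd_def quadratic_form_orthogonal_conj
  by (simp add: sym_mat_orthogonal_conj sum_nonneg)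

lemma trace_orthogonal_conj:
  "orthogonal_matrix (U::real^'n^'n) \<Longrightarrow> trace (U ** diag_mat a ** transpose U) = (\<Sum>j\<in>UNIV. a$j)"
  using trace_mul_sym[of "U ** diag_mat a" "transpose U"]
  by (simp add: matrix_mul_assoc orthogonal_matrix_transpose_mult trace_diag_mat)

lemma mult_orthogonal_conj:
  assumes "orthogonal_matrix (U::real^'n^'n)"
  shows "(U ** diag_mat a ** transpose U) ** (U ** diag_mat b ** transpose U) = U ** diag_mat (a * b) ** transpose U"
proof -
  have "(U ** diag_mat a ** transpose U) ** (U ** diag_mat b ** transpose U)
      = U ** diag_mat a ** (transpose U ** U) ** diag_mat b ** transpose U"
    by (simp add: matrix_mul_assoc)
  also have "\<dots> = U ** (diag_mat a ** diag_mat b) ** transpose U"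
    using assms by (simp add: orthogonal_matrix_transpose_mult matrix_mul_assoc)
  finally show ?thesis by (simp add: diag_mat_mult)
qed

lemma diff_orthogonal_conj:
  "(U::real^'n^'n) ** diag_mat a ** transpose U - U ** diag_mat b ** transpose U = U ** diag_mat (a - b) ** transpose U"
  unfolding diag_mat_diff[symmetric]
  by (simp add: matrix_matrix_mult_def vec_eq_iff algebra_simps sum_subtractf)

lemma orthogonal_conj_eigenvector:
  assumes "orthogonal_matrix (U::real^'n^'n)"
  shows "(U ** diag_mat d ** transpose U) *v (U *v axis j 1) = d$j *\<^sub>R (U *v axis j 1)"
proof -
  have "(U ** diag_mat d ** transpose U) *v (U *v axis j 1) = U *v (diag_mat d *v ((transpose U ** U) *v axis j 1))"
    by (simp only: matrix_vector_mul_assoc matrix_mul_assoc)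
  then show ?thesis
    using assms by (simp add: orthogonal_matrix_transpose_mult diag_mat_mult_axis matrix_vector_mult_scaleR)
qed

lemma pn_decomp_annihilate:
  fixes M P Q :: "real^'n^'n"
  assumes "pn_decomp M P Q"
  shows "P *v (Q *v z) = 0" and "Q *v (P *v z) = 0"
proof -
  have P: "psd P" and Q: "psd Q" and PQ: "P ** Q = mat 0"
    using assms by (auto simp: pn_decomp_def)
  have "Q ** P = mat 0"
    using arg_cong[OF PQ, of transpose] P Q
    by (simp add: matrix_transpose_mul psd_def sym_mat_def transpose_mat[of 0, unfolded mat_0])
  then show "P *v (Q *v z) = 0" "Q *v (P *v z) = 0"
    using PQ by (simp_all add: matrix_vector_mul_assoc)
qed

text \<open>Since \<open>P\<close> and \<open>Q\<close> annihilate each other, \<open>P\<close> commutes with \<open>M = P - Q\<close> and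
  preserves its eigenspaces; positivity of \<open>P\<close> and \<open>Q\<close> then pins down the action of \<open>P\<close>.\<close>
lemma pn_decomp_eigenvector:
  fixes M P Q :: "real^'n^'n"
  assumes pn: "pn_decomp M P Q" and eigen: "M *v v = \<mu> *\<^sub>R v"
  shows "P *v v = pos_part \<mu> *\<^sub>R v"
proof -
  have P: "psd P" and Q: "psd Q" and M: "M = P - Q"
    using pn by (auto simp: pn_decomp_def)
  note PQ = pn_decomp_annihilate(1)[OF pn] and QP = pn_decomp_annihilate(2)[OF pn]
  have MP: "M *v (P *v z) = P *v (P *v z)" for z
    using QP[of z] by (simp add: M matrix_vector_mult_diff_rdistrib)
  have PM: "P *v (M *v z) = P *v (P *v z)" for z
    using PQ[of z] by (simp add: M matrix_vector_mult_diff_distrib matrix_vector_mult_diff_rdistrib)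
  have MPv: "M *v (P *v v) = \<mu> *\<^sub>R (P *v v)"
    using MP[of v] PM[of v] eigen by (simp add: matrix_vector_mult_scaleR)
  show ?thesis
  proof (cases "\<mu> > 0")
    case True
    define w where "w = P *v v - \<mu> *\<^sub>R v"
    have "P *v w = 0"
      unfolding w_def using MP[of v] MPv by (simp add: matrix_vector_mult_diff_distrib matrix_vector_mult_scaleR)
    moreover have "M *v w = \<mu> *\<^sub>R w"
      unfolding w_def using MPv eigen
      by (simp add: matrix_vector_mult_diff_distrib matrix_vector_mult_scaleR algebra_simps)
    ultimately have "Q *v w = - \<mu> *\<^sub>R w"
      by (simp add: M matrix_vector_mult_diff_rdistrib minus_equation_iff[of "Q *v w"])
    moreover have "0 \<le> w \<bullet> (Q *v w)" using Q by (simp add: psd_def)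
    ultimately have "w \<bullet> w \<le> 0" using True by (simp add: mult_le_0_iff)
    then have "w = 0" using inner_gt_zero_iff[of w] by linarith
    then show ?thesis using True unfolding w_def by (simp add: pos_part_def)
  next
    case False
    define w where "w = P *v v"
    have "P = M + Q" using M by simp
    then have "P *v w = \<mu> *\<^sub>R w"
      using MPv QP[of v] by (simp add: w_def matrix_vector_mult_add_rdistrib)
    then have "w \<bullet> w = \<mu> * (v \<bullet> (P *v v))"
      using sym_mat_inner_commute[OF psd_imp_sym_mat[OF P], of v w] by (simp add: w_def)
    moreover have "0 \<le> v \<bullet> (P *v v)" using P by (simp add: psd_def)
    ultimately have "w \<bullet> w \<le> 0" using False by (simp add: mult_le_0_iff)
    then have "w = 0" using inner_gt_zero_iff[of w] by linarith
    then show ?thesis using False unfolding w_def by (simp add: pos_part_def)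
  qed
qed

lemma pn_decomp_orthogonal_conj:
  assumes U: "orthogonal_matrix (U::real^'n^'n)"
  shows "pn_decomp (U ** diag_mat d ** transpose U)
           (U ** diag_mat (\<chi> i. pos_part (d$i)) ** transpose U)
           (U ** diag_mat (\<chi> i. neg_part (d$i)) ** transpose U)"
proof -
  have "d = (\<chi> i. pos_part (d$i)) - (\<chi> i. neg_part (d$i))"
    and "(\<chi> i. pos_part (d$i)) * (\<chi> i. neg_part (d$i)) = 0"
    by (auto simp: vec_eq_iff pos_part_def neg_part_def)
  moreover have "U ** diag_mat 0 ** transpose U = mat 0"
  proof -
    have "diag_mat 0 = (0::real^'n^'n)" by (simp add: diag_mat_def vec_eq_iff)
    then show ?thesis by (simp add: matrix_matrix_mult_def vec_eq_iff)
  qed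
  ultimately show ?thesis
    unfolding pn_decomp_def diff_orthogonal_conj mult_orthogonal_conj[OF U]
    by (auto intro!: psd_orthogonal_conj simp: pos_part_def neg_part_def)
qed

lemma pn_decomp_pos_eq:
  fixes M P Q :: "real^'n^'n"
  assumes U: "orthogonal_matrix U" and M: "M = U ** diag_mat d ** transpose U"
    and pn: "pn_decomp M P Q"
  shows "P = U ** diag_mat (\<chi> i. pos_part (d$i)) ** transpose U"
proof -
  let ?P = "U ** diag_mat (\<chi> i. pos_part (d$i)) ** transpose U"
  have "P *v (U *v axis j 1) = ?P *v (U *v axis j 1)" for j
    using pn_decomp_eigenvector[OF pn] orthogonal_conj_eigenvector[OF U] M by simp
  then have "column j (P ** U) = column j (?P ** U)" for j
    by (simp add: matrix_vector_mult_basis[symmetric] matrix_vector_mul_assoc[symmetric])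
  then have "P ** U = ?P ** U"
    by (simp add: column_def vec_eq_iff)
  then have "P ** (U ** transpose U) = ?P ** (U ** transpose U)"
    by (simp add: matrix_mul_assoc)
  then show ?thesis
    using U by (simp add: orthogonal_matrix_def)
qed

lemma mat_pos_neg_orthogonal_conj:
  fixes M :: "real^'n^'n"
  assumes U: "orthogonal_matrix U" and M: "M = U ** diag_mat d ** transpose U"
  shows "mat_pos M = U ** diag_mat (\<chi> i. pos_part (d$i)) ** transpose U"
    and "mat_neg M = U ** diag_mat (\<chi> i. neg_part (d$i)) ** transpose U"
proof -
  let ?P = "U ** diag_mat (\<chi> i. pos_part (d$i)) ** transpose U"
    and ?Q = "U ** diag_mat (\<chi> i. neg_part (d$i)) ** transpose U"
  have pn: "pn_decomp M ?P ?Q" using pn_decomp_orthogonal_conj[OF U] M by simp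
  have unique: "P = ?P \<and> Q = ?Q" if "pn_decomp M P Q" for P Q
  proof -
    have "P = ?P" using pn_decomp_pos_eq[OF U M that] .
    moreover have "Q = P - M" using that by (simp add: pn_decomp_def)
    moreover have "?Q = ?P - M" using pn by (simp add: pn_decomp_def)
    ultimately show ?thesis by simp
  qed
  show "mat_pos M = ?P"
    unfolding mat_pos_def using pn unique by (intro the_equality) blast+
  show "mat_neg M = ?Q"
    unfolding mat_neg_def using pn unique by (intro the_equality) blast+
qed

lemma pn_decomp_mat_pos_neg:
  fixes M :: "real^'n^'n"
  assumes "sym_mat M"
  shows "pn_decomp M (mat_pos M) (mat_neg M)"
proof -
  obtain U d where U: "orthogonal_matrix U" and M: "M = U ** diag_mat d ** transpose U"
    using sym_mat_spectral[OF assms] by blast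
  show ?thesis using mat_pos_neg_orthogonal_conj[OF U M] pn_decomp_orthogonal_conj[OF U] M by simp
qed

lemma trace_mat_pos_orthogonal_conj:
  "orthogonal_matrix (U::real^'n^'n) \<Longrightarrow>
    trace (mat_pos (U ** diag_mat d ** transpose U)) = (\<Sum>j\<in>UNIV. pos_part (d$j))"
  by (simp add: mat_pos_neg_orthogonal_conj trace_orthogonal_conj)

lemma diag_eq_quadratic_form_axis: "(B::real^'n^'n)$j$j = axis j 1 \<bullet> (B *v axis j 1)"
  by (simp only: inner_axis' matrix_vector_mult_basis) (simp add: column_def)

lemma psd_diag_nonneg: "psd P \<Longrightarrow> 0 \<le> P$i$i"
  by (metis psd_def diag_eq_quadratic_form_axis)

lemma psd_trace_nonneg: "psd P \<Longrightarrow> 0 \<le> trace P"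
  unfolding trace_def by (simp add: sum_nonneg psd_diag_nonneg)

lemma trace_mat_pos_neg:
  fixes M :: "real^'n^'n"
  assumes "sym_mat M"
  shows "0 \<le> trace (mat_pos M)" "0 \<le> trace (mat_neg M)"
    and "trace M = trace (mat_pos M) - trace (mat_neg M)"
proof -
  have "psd (mat_pos M)" "psd (mat_neg M)" "M = mat_pos M - mat_neg M"
    using pn_decomp_mat_pos_neg[OF assms] by (auto simp: pn_decomp_def)
  then show "0 \<le> trace (mat_pos M)" "0 \<le> trace (mat_neg M)"
    and "trace M = trace (mat_pos M) - trace (mat_neg M)"
    by (simp_all add: psd_trace_nonneg flip: trace_sub)
qed

text \<open>\<open>trace (mat_pos M)\<close> is the maximum of \<open>trace (A ** M)\<close> over \<open>0 \<le> A \<le> I\<close>; as a supremum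
  of linear functionals it is subadditive and monotone.\<close>
definition psd_le_id :: "real^'n^'n \<Rightarrow> bool" where
  "psd_le_id A \<longleftrightarrow> (\<forall>x. 0 \<le> x \<bullet> (A *v x) \<and> x \<bullet> (A *v x) \<le> x \<bullet> x)"

lemma psd_le_id_complement: "psd_le_id A \<Longrightarrow> psd_le_id (mat 1 - A)"
  unfolding psd_le_id_def by (simp add: matrix_vector_mult_diff_rdistrib inner_diff_right)

lemma orthogonal_matrix_column_unit:
  assumes "orthogonal_matrix (U::real^'n^'n)"
  shows "(U *v axis j 1) \<bullet> (U *v axis j 1) = 1"
proof -
  have "(U *v axis j 1) \<bullet> (U *v axis j 1) = ((transpose U ** U) *v axis j 1) \<bullet> axis j 1"
    by (simp only: inner_matrix_vector_transpose matrix_vector_mul_assoc)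
  then show ?thesis
    using assms by (simp add: orthogonal_matrix_transpose_mult inner_axis_axis)
qed

lemma trace_mult_orthogonal_conj:
  fixes U A :: "real^'n^'n"
  assumes "orthogonal_matrix U"
  shows "trace (A ** (U ** diag_mat a ** transpose U))
     = (\<Sum>j\<in>UNIV. a$j * ((U *v axis j 1) \<bullet> (A *v (U *v axis j 1))))"
proof -
  have "trace (A ** (U ** diag_mat a ** transpose U)) = trace ((transpose U ** A ** U) ** diag_mat a)"
    using trace_mul_sym[of "A ** U ** diag_mat a" "transpose U"] by (simp add: matrix_mul_assoc)
  also have "\<dots> = (\<Sum>j\<in>UNIV. (transpose U ** A ** U)$j$j * a$j)"
    by (rule trace_mult_diag_mat)
  also have "\<dots> = (\<Sum>j\<in>UNIV. a$j * ((U *v axis j 1) \<bullet> (A *v (U *v axis j 1))))"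
  proof (rule sum.cong[OF refl])
    fix j
    have "(transpose U ** A ** U)$j$j = axis j 1 \<bullet> (transpose U *v (A *v (U *v axis j 1)))"
      by (simp only: diag_eq_quadratic_form_axis matrix_vector_mul_assoc matrix_mul_assoc)
    also have "\<dots> = (U *v axis j 1) \<bullet> (A *v (U *v axis j 1))"
      using inner_matrix_vector_transpose[of "axis j 1" "transpose U"] by simp
    finally show "(transpose U ** A ** U)$j$j * a$j = a$j * ((U *v axis j 1) \<bullet> (A *v (U *v axis j 1)))"
      by simp
  qed
  finally show ?thesis .
qed

lemma trace_mult_le_trace_mat_pos:
  fixes M A :: "real^'n^'n"
  assumes "sym_mat M" and A: "psd_le_id A"
  shows "trace (A ** M) \<le> trace (mat_pos M)"
proof -
  obtain U d where U: "orthogonal_matrix U" and M: "M = U ** diag_mat d ** transpose U"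
    using sym_mat_spectral[OF assms(1)] by blast
  have "trace (A ** M) = (\<Sum>j\<in>UNIV. d$j * ((U *v axis j 1) \<bullet> (A *v (U *v axis j 1))))"
    unfolding M by (rule trace_mult_orthogonal_conj[OF U])
  also have "\<dots> \<le> (\<Sum>j\<in>UNIV. pos_part (d$j))"
  proof (rule sum_mono)
    fix j
    let ?c = "(U *v axis j 1) \<bullet> (A *v (U *v axis j 1))"
    have "0 \<le> ?c" "?c \<le> 1"
      using A orthogonal_matrix_column_unit[OF U, of j] unfolding psd_le_id_def by metis+
    then show "d$j * ?c \<le> pos_part (d$j)"
      by (cases "d$j \<ge> 0") (auto simp: pos_part_def mult_left_le mult_nonpos_nonneg)
  qed
  also have "\<dots> = trace (mat_pos M)" unfolding M by (simp add: trace_mat_pos_orthogonal_conj[OF U])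
  finally show ?thesis .
qed

lemma trace_mat_pos_attained:
  fixes M :: "real^'n^'n"
  assumes "sym_mat M"
  obtains A where "psd_le_id A" "trace (A ** M) = trace (mat_pos M)"
proof -
  obtain U d where U: "orthogonal_matrix U" and M: "M = U ** diag_mat d ** transpose U"
    using sym_mat_spectral[OF assms] by blast
  define e where "e = (\<chi> j. if d$j > 0 then 1 else (0::real))"
  define A where "A = U ** diag_mat e ** transpose U"
  have "psd_le_id A" unfolding psd_le_id_def
  proof
    fix x
    let ?y = "transpose U *v x"
    have "(\<Sum>j\<in>UNIV. (?y$j)^2) = ?y \<bullet> ?y"
      by (simp add: inner_vec_def power2_eq_square)
    also have "\<dots> = x \<bullet> ((U ** transpose U) *v x)"
      by (simp only: inner_matrix_vector_transpose[symmetric] matrix_vector_mul_assoc)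
    also have "\<dots> = x \<bullet> x"
      using U by (simp add: orthogonal_matrix_def)
    finally have "(\<Sum>j\<in>UNIV. (?y$j)^2) = x \<bullet> x" .
    moreover have "0 \<le> (\<Sum>j\<in>UNIV. e$j * (?y$j)^2)" "(\<Sum>j\<in>UNIV. e$j * (?y$j)^2) \<le> (\<Sum>j\<in>UNIV. (?y$j)^2)"
      by (auto intro!: sum_nonneg sum_mono simp: e_def)
    ultimately show "0 \<le> x \<bullet> (A *v x) \<and> x \<bullet> (A *v x) \<le> x \<bullet> x"
      unfolding A_def quadratic_form_orthogonal_conj by simp
  qed
  moreover have "trace (A ** M) = trace (mat_pos M)"
  proof -
    have "e * d = (\<chi> j. pos_part (d$j))" by (simp add: e_def vec_eq_iff pos_part_def)
    then show ?thesis
      unfolding A_def M mult_orthogonal_conj[OF U]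
      by (simp add: trace_orthogonal_conj[OF U] trace_mat_pos_orthogonal_conj[OF U])
  qed
  ultimately show ?thesis using that by blast
qed

lemma trace_mult_psd_nonneg:
  fixes A B :: "real^'n^'n"
  assumes A: "psd_le_id A" and B: "psd B"
  shows "0 \<le> trace (A ** B)"
proof -
  obtain U b where U: "orthogonal_matrix U" and B_eq: "B = U ** diag_mat b ** transpose U"
    using sym_mat_spectral[OF psd_imp_sym_mat[OF B]] by blast
  have "0 \<le> b$j" for j
  proof -
    have "0 \<le> (U *v axis j 1) \<bullet> (B *v (U *v axis j 1))" using B by (simp add: psd_def)
    also have "\<dots> = b$j"
      using orthogonal_conj_eigenvector[OF U, of b j] orthogonal_matrix_column_unit[OF U, of j] B_eq
      by simp
    finally show ?thesis .
  qed
  moreover have "0 \<le> (U *v axis j 1) \<bullet> (A *v (U *v axis j 1))" for j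
    using A by (simp add: psd_le_id_def)
  ultimately show ?thesis
    unfolding B_eq trace_mult_orthogonal_conj[OF U] by (simp add: sum_nonneg)
qed

lemma trace_mult_psd_le_trace:
  fixes A B :: "real^'n^'n"
  assumes "psd_le_id A" and "psd B"
  shows "trace (A ** B) \<le> trace B"
proof -
  have "0 \<le> trace ((mat 1 - A) ** B)"
    using assms by (intro trace_mult_psd_nonneg psd_le_id_complement)
  also have "trace ((mat 1 - A) ** B) = trace B - trace (A ** B)"
    by (simp add: matrix_matrix_mult_def trace_def vec_eq_iff mat_def sum_subtractf
        left_diff_distrib if_distrib[of "\<lambda>z. z * _"] cong: if_cong)
  finally show ?thesis by simp
qed

lemma trace_mat_pos_add_le:
  fixes X Y :: "real^'n^'n"
  assumes "sym_mat X" "sym_mat Y"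
  shows "trace (mat_pos (X + Y)) \<le> trace (mat_pos X) + trace (mat_pos Y)"
proof -
  obtain A where A: "psd_le_id A" "trace (A ** (X + Y)) = trace (mat_pos (X + Y))"
    using trace_mat_pos_attained[OF sym_mat_add[OF assms]] by blast
  then show ?thesis
    using trace_mult_le_trace_mat_pos[OF assms(1) A(1)] trace_mult_le_trace_mat_pos[OF assms(2) A(1)]
    by (simp add: matrix_add_ldistrib trace_add)
qed

lemma trace_mat_pos_add_psd:
  fixes Z B :: "real^'n^'n"
  assumes Z: "sym_mat Z" and B: "psd B"
  shows "trace (mat_pos Z) \<le> trace (mat_pos (Z + B))"
    and "trace (mat_pos (Z + B)) \<le> trace (mat_pos Z) + trace B"
proof -
  have ZB: "sym_mat (Z + B)" using Z B by (simp add: sym_mat_add psd_imp_sym_mat)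
  obtain A where A: "psd_le_id A" "trace (A ** Z) = trace (mat_pos Z)"
    using trace_mat_pos_attained[OF Z] by blast
  then show "trace (mat_pos Z) \<le> trace (mat_pos (Z + B))"
    using trace_mult_le_trace_mat_pos[OF ZB A(1)] trace_mult_psd_nonneg[OF A(1) B]
    by (simp add: matrix_add_ldistrib trace_add)
  obtain A' where A': "psd_le_id A'" "trace (A' ** (Z + B)) = trace (mat_pos (Z + B))"
    using trace_mat_pos_attained[OF ZB] by blast
  then show "trace (mat_pos (Z + B)) \<le> trace (mat_pos Z) + trace B"
    using trace_mult_le_trace_mat_pos[OF Z A'(1)] trace_mult_psd_le_trace[OF A'(1) B]
    by (simp add: matrix_add_ldistrib trace_add)
qed

lemma trace_mat_pos_zero: "trace (mat_pos (0::real^'n^'n)) = 0"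
proof -
  have "sym_mat (0::real^'n^'n)" by (simp add: sym_mat_def transpose_def vec_eq_iff)
  then obtain A where "trace (A ** (0::real^'n^'n)) = trace (mat_pos (0::real^'n^'n))"
    by (rule trace_mat_pos_attained)
  moreover have "A ** (0::real^'n^'n) = 0" by (simp add: matrix_matrix_mult_def vec_eq_iff)
  ultimately show ?thesis by (simp add: trace_def)
qed

section \<open>The Pucci maximal operator and elliptic extensions\<close>

definition pucci_max :: "real \<Rightarrow> real \<Rightarrow> real^'n^'n \<Rightarrow> real" where
  "pucci_max lam Lam M = Lam * trace (mat_pos M) - lam * trace (mat_neg M)"

lemma pucci_max_eq:
  "sym_mat M \<Longrightarrow> pucci_max lam Lam M = (Lam - lam) * trace (mat_pos M) + lam * trace M"
proof -
  assume "sym_mat M"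
  then have "trace (mat_pos M) = trace M + trace (mat_neg M)" by (simp add: trace_mat_pos_neg(3))
  then show ?thesis unfolding pucci_max_def by (simp add: algebra_simps)
qed

lemma pucci_max_zero: "pucci_max lam Lam (0::real^'n^'n) = 0"
proof -
  have "sym_mat (0::real^'n^'n)" by (simp add: sym_mat_def transpose_def vec_eq_iff)
  then show ?thesis by (simp add: pucci_max_eq trace_mat_pos_zero trace_0[unfolded mat_0])
qed

lemma pucci_max_add_le:
  assumes "lam \<le> Lam" "sym_mat X" "sym_mat Y"
  shows "pucci_max lam Lam (X + Y) \<le> pucci_max lam Lam X + pucci_max lam Lam Y"
proof -
  have "(Lam - lam) * trace (mat_pos (X + Y)) \<le> (Lam - lam) * (trace (mat_pos X) + trace (mat_pos Y))"
    using assms trace_mat_pos_add_le by (intro mult_left_mono) auto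
  then show ?thesis
    using assms by (simp add: pucci_max_eq sym_mat_add trace_add algebra_simps)
qed

lemma uniformly_elliptic_pucci_max:
  fixes H :: "real^'n^'n"
  assumes "0 \<le> lam" "lam \<le> Lam" and H: "sym_mat H"
  shows "uniformly_elliptic (\<lambda>X. c + pucci_max lam Lam (X - H)) lam Lam"
  unfolding uniformly_elliptic_def
proof (intro allI impI conjI)
  fix A B :: "real^'n^'n"
  assume AB: "sym_mat A \<and> psd B"
  then have Z: "sym_mat (A - H)" and B: "psd B" using H by (auto simp: sym_mat_diff)
  have ZB: "sym_mat (A - H + B)" using Z B by (simp add: sym_mat_add psd_imp_sym_mat)
  have "c + pucci_max lam Lam (A + B - H) - (c + pucci_max lam Lam (A - H))
      = pucci_max lam Lam (A - H + B) - pucci_max lam Lam (A - H)"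
    by (simp add: diff_add_eq)
  also have "\<dots> = (Lam - lam) * (trace (mat_pos (A - H + B)) - trace (mat_pos (A - H))) + lam * trace B"
    unfolding pucci_max_eq[OF ZB] pucci_max_eq[OF Z] by (simp add: trace_add trace_sub algebra_simps)
  finally have "c + pucci_max lam Lam (A + B - H) - (c + pucci_max lam Lam (A - H))
      = (Lam - lam) * (trace (mat_pos (A - H + B)) - trace (mat_pos (A - H))) + lam * trace B" .
  moreover have "0 \<le> (Lam - lam) * (trace (mat_pos (A - H + B)) - trace (mat_pos (A - H)))"
    using trace_mat_pos_add_psd(1)[OF Z B] assms by simp
  moreover have "(Lam - lam) * (trace (mat_pos (A - H + B)) - trace (mat_pos (A - H))) \<le> (Lam - lam) * trace B"
    using trace_mat_pos_add_psd(2)[OF Z B] assms by (intro mult_left_mono) auto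
  ultimately show "lam * trace B \<le> c + pucci_max lam Lam (A + B - H) - (c + pucci_max lam Lam (A - H))"
    and "c + pucci_max lam Lam (A + B - H) - (c + pucci_max lam Lam (A - H)) \<le> Lam * trace B"
    by (simp_all add: algebra_simps)
qed

lemma cINF_diff_bounds:
  fixes f g :: "'a \<Rightarrow> real"
  assumes "S \<noteq> {}" "bdd_below (f ` S)" "bdd_below (g ` S)"
    and "\<And>p. p \<in> S \<Longrightarrow> c \<le> g p - f p" "\<And>p. p \<in> S \<Longrightarrow> g p - f p \<le> d"
  shows "c \<le> (INF p\<in>S. g p) - (INF p\<in>S. f p)" and "(INF p\<in>S. g p) - (INF p\<in>S. f p) \<le> d"
proof -
  have "(INF p\<in>S. f p) + c \<le> (INF p\<in>S. g p)"
  proof (rule cINF_greatest[OF assms(1)])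
    fix p assume "p \<in> S"
    then show "(INF p\<in>S. f p) + c \<le> g p" using cINF_lower[OF assms(2)] assms(4) by fastforce
  qed
  moreover have "(INF p\<in>S. g p) - d \<le> (INF p\<in>S. f p)"
  proof (rule cINF_greatest[OF assms(1)])
    fix p assume "p \<in> S"
    then show "(INF p\<in>S. g p) - d \<le> f p" using cINF_lower[OF assms(3)] assms(5) by fastforce
  qed
  ultimately show "c \<le> (INF p\<in>S. g p) - (INF p\<in>S. f p)" "(INF p\<in>S. g p) - (INF p\<in>S. f p) \<le> d"
    by simp_all
qed

lemma uniformly_elliptic_INF:
  fixes F :: "'a \<Rightarrow> real^'n^'n \<Rightarrow> real"
  assumes "S \<noteq> {}" and "\<And>p. p \<in> S \<Longrightarrow> uniformly_elliptic (F p) lam Lam"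
    and "\<And>X. sym_mat X \<Longrightarrow> bdd_below ((\<lambda>p. F p X) ` S)"
  shows "uniformly_elliptic (\<lambda>X. INF p\<in>S. F p X) lam Lam"
  unfolding uniformly_elliptic_def
proof (intro allI impI)
  fix A B :: "real^'n^'n"
  assume AB: "sym_mat A \<and> psd B"
  then have "bdd_below ((\<lambda>p. F p A) ` S)" "bdd_below ((\<lambda>p. F p (A + B)) ` S)"
    using assms(3) by (auto simp: sym_mat_add psd_imp_sym_mat)
  moreover have "lam * trace B \<le> F p (A + B) - F p A" "F p (A + B) - F p A \<le> Lam * trace B"
    if "p \<in> S" for p
    using assms(2)[OF that] AB unfolding uniformly_elliptic_def by blast+
  ultimately show "lam * trace B \<le> (INF p\<in>S. F p (A + B)) - (INF p\<in>S. F p A) \<and>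
      (INF p\<in>S. F p (A + B)) - (INF p\<in>S. F p A) \<le> Lam * trace B"
    using cINF_diff_bounds[OF assms(1)] by blast
qed

text \<open>The inf-convolution of the data with the Pucci operator: the hypothesis is exactly what
  makes it interpolate, and subadditivity of the Pucci operator makes it finite.\<close>
lemma pucci_max_elliptic_extension:
  fixes H :: "'a \<Rightarrow> real^'n^'n"
  assumes lam: "0 \<le> lam" "lam \<le> Lam" and H: "\<And>p. p \<in> S \<Longrightarrow> sym_mat (H p)"
    and data: "\<And>p q. p \<in> S \<Longrightarrow> q \<in> S \<Longrightarrow> g p - g q \<le> pucci_max lam Lam (H p - H q)"
  shows "\<exists>F. uniformly_elliptic F lam Lam \<and> (\<forall>p\<in>S. g p = F (H p))"
proof (cases "S = {}")
  case True
  have "sym_mat (0::real^'n^'n)" by (simp add: sym_mat_def transpose_def vec_eq_iff)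
  from uniformly_elliptic_pucci_max[OF lam this, of 0] have "uniformly_elliptic (pucci_max lam Lam :: real^'n^'n \<Rightarrow> real) lam Lam"
    by simp
  then show ?thesis using True by blast
next
  case False
  then obtain p0 where p0: "p0 \<in> S" by blast
  define F where "F X = (INF p\<in>S. g p + pucci_max lam Lam (X - H p))" for X
  have bdd: "bdd_below ((\<lambda>p. g p + pucci_max lam Lam (X - H p)) ` S)" if X: "sym_mat X" for X
  proof (rule bdd_belowI2)
    fix p assume p: "p \<in> S"
    have "g p0 - g p \<le> pucci_max lam Lam ((H p0 - X) + (X - H p))"
      using data[OF p0 p] by simp
    also have "\<dots> \<le> pucci_max lam Lam (H p0 - X) + pucci_max lam Lam (X - H p)"
      using lam H p p0 X by (intro pucci_max_add_le) (auto simp: sym_mat_diff)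
    finally show "g p0 - pucci_max lam Lam (H p0 - X) \<le> g p + pucci_max lam Lam (X - H p)" by simp
  qed
  have "uniformly_elliptic F lam Lam"
    unfolding F_def
  proof (rule uniformly_elliptic_INF[OF False])
    show "uniformly_elliptic (\<lambda>X. g p + pucci_max lam Lam (X - H p)) lam Lam" if "p \<in> S" for p
      by (rule uniformly_elliptic_pucci_max[OF lam H[OF that]])
  qed (rule bdd)
  moreover have "g q = F (H q)" if q: "q \<in> S" for q
  proof (rule antisym)
    show "g q \<le> F (H q)"
      unfolding F_def using False data[OF q] by (intro cINF_greatest) (auto simp: algebra_simps)
    show "F (H q) \<le> g q"
      unfolding F_def using cINF_lower[OF bdd[OF H[OF q]] q] by (simp add: pucci_max_zero)
  qed
  ultimately show ?thesis by blast
qed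

section \<open>Symmetry of the Hessian\<close>

lemma has_field_derivative_along_line:
  fixes f :: "'a::real_normed_vector \<Rightarrow> real"
  assumes "f differentiable (at (a + s *\<^sub>R v))"
  shows "((\<lambda>\<sigma>. f (a + \<sigma> *\<^sub>R v)) has_field_derivative frechet_derivative f (at (a + s *\<^sub>R v)) v)
    (at s within S)"
proof -
  let ?L = "frechet_derivative f (at (a + s *\<^sub>R v))"
  have f: "(f has_derivative ?L) (at (a + s *\<^sub>R v))"
    using assms frechet_derivative_works by blast
  have "((f \<circ> (\<lambda>\<sigma>. a + \<sigma> *\<^sub>R v)) has_derivative (?L \<circ> (\<lambda>\<sigma>. \<sigma> *\<^sub>R v))) (at s within S)"
    by (rule diff_chain_within) (auto intro!: derivative_eq_intros has_derivative_at_withinI[OF f])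
  moreover have "?L \<circ> (\<lambda>\<sigma>. \<sigma> *\<^sub>R v) = (*) (?L v)"
    using linear_scale[OF has_derivative_linear[OF f]] by (auto simp: comp_def)
  ultimately show ?thesis unfolding has_field_derivative_def comp_def by simp
qed

lemma mixed_second_difference_approx:
  fixes f :: "real^'n \<Rightarrow> real"
  assumes dif: "\<And>z. norm z < r \<Longrightarrow> f differentiable (at (x + z))"
    and approx: "\<And>z. norm z < r \<Longrightarrow> norm (grad f (x + z) - grad f x - G' z) \<le> e * norm z"
    and lin: "linear G'" and e: "0 \<le> e" and t: "0 < t" "2 * t < r"
  shows "\<bar>f (x + t *\<^sub>R axis j 1 + t *\<^sub>R axis i 1) - f (x + t *\<^sub>R axis i 1) - f (x + t *\<^sub>R axis j 1) + f x
           - t * t * G' (axis j 1) $ i\<bar> \<le> 3 * e * (t * t)"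
proof -
  let ?ei = "axis i (1::real)" and ?ej = "axis j (1::real)"
  let ?c = "G' ?ej $ i"
  define h where "h s = f (x + t *\<^sub>R ?ej + s *\<^sub>R ?ei) - f (x + s *\<^sub>R ?ei) - s * (t * ?c)" for s
  define h' where "h' s = grad f (x + t *\<^sub>R ?ej + s *\<^sub>R ?ei) $ i - grad f (x + s *\<^sub>R ?ei) $ i - t * ?c" for s
  have norms: "norm (t *\<^sub>R ?ej + s *\<^sub>R ?ei) \<le> 2 * t" "norm (s *\<^sub>R ?ei) \<le> t" if "s \<in> {0..t}" for s
    using that t norm_triangle_ineq[of "t *\<^sub>R ?ej" "s *\<^sub>R ?ei"] by auto
  have "(h has_field_derivative h' s) (at s within {0..t})" if s: "s \<in> {0..t}" for s
  proof -
    have "f differentiable (at (x + t *\<^sub>R ?ej + s *\<^sub>R ?ei))" "f differentiable (at (x + s *\<^sub>R ?ei))"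
      using dif[of "t *\<^sub>R ?ej + s *\<^sub>R ?ei"] dif[of "s *\<^sub>R ?ei"] norms[OF s] t by (auto simp: add.assoc)
    then show ?thesis
      unfolding h_def h'_def grad_def
      by (auto intro!: derivative_eq_intros has_field_derivative_along_line)
  qed
  moreover have "norm (h' s) \<le> 3 * e * t" if s: "s \<in> {0..t}" for s
  proof -
    let ?z1 = "t *\<^sub>R ?ej + s *\<^sub>R ?ei" and ?z2 = "s *\<^sub>R ?ei"
    have "grad f (x + ?z1) - grad f (x + ?z2) - t *\<^sub>R G' ?ej
        = (grad f (x + ?z1) - grad f x - G' ?z1) - (grad f (x + ?z2) - grad f x - G' ?z2)"
      using linear_add[OF lin] linear_scale[OF lin] by (simp add: algebra_simps)
    then have "norm (grad f (x + ?z1) - grad f (x + ?z2) - t *\<^sub>R G' ?ej) \<le> e * norm ?z1 + e * norm ?z2"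
      using approx[of ?z1] approx[of ?z2] norms[OF s] t norm_triangle_ineq4 by (smt (verit))
    also have "\<dots> \<le> e * (2 * t) + e * t"
      using norms[OF s] e by (intro add_mono mult_left_mono) auto
    finally show ?thesis
      using component_le_norm_cart[of "grad f (x + ?z1) - grad f (x + ?z2) - t *\<^sub>R G' ?ej" i]
      by (simp add: h'_def add.assoc)
  qed
  ultimately have "norm (h t - h 0) \<le> 3 * e * t * norm (t - 0)"
    using t by (intro field_differentiable_bound[OF convex_real_interval(5)]) auto
  then show ?thesis using t by (simp add: h_def algebra_simps)
qed

lemma has_derivative_grad_symmetric:
  fixes f :: "real^'n \<Rightarrow> real"
  assumes r: "0 < r" and dif: "\<And>z. norm z < r \<Longrightarrow> f differentiable (at (x + z))"
    and G': "(grad f has_derivative G') (at x)"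
  shows "G' (axis j 1) $ i = G' (axis i 1) $ j"
proof (rule ccontr)
  let ?\<delta> = "\<bar>G' (axis j 1) $ i - G' (axis i 1) $ j\<bar>"
  assume "G' (axis j 1) $ i \<noteq> G' (axis i 1) $ j"
  then have \<delta>: "?\<delta> > 0" by simp
  obtain d where d: "d > 0"
    and approx: "\<And>y. norm (y - x) < d \<Longrightarrow> norm (grad f y - grad f x - G' (y - x)) \<le> ?\<delta> / 7 * norm (y - x)"
    using G' \<delta> unfolding has_derivative_at_alt by (metis divide_pos_pos zero_less_numeral)
  define t where "t = min r d / 3"
  have t: "0 < t" "2 * t < min r d" using r d by (auto simp: t_def)
  have approx': "norm (grad f (x + z) - grad f x - G' z) \<le> ?\<delta> / 7 * norm z" if "norm z < min r d" for z
    using approx[of "x + z"] that by simp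
  note second_difference =
    mixed_second_difference_approx[OF dif approx' has_derivative_linear[OF G'] _ t, simplified]
  define D where "D = f (x + t *\<^sub>R axis j 1 + t *\<^sub>R axis i 1) - f (x + t *\<^sub>R axis i 1)
    - f (x + t *\<^sub>R axis j 1) + f x"
  have "x + t *\<^sub>R axis i 1 + t *\<^sub>R axis j 1 = x + t *\<^sub>R axis j 1 + t *\<^sub>R axis i (1::real)"
    by (simp add: algebra_simps)
  then have "\<bar>D - t * t * G' (axis j 1) $ i\<bar> \<le> 3 * (?\<delta> / 7) * (t * t)"
    and "\<bar>D - t * t * G' (axis i 1) $ j\<bar> \<le> 3 * (?\<delta> / 7) * (t * t)"
    using second_difference[of j i] second_difference[of i j] \<delta> by (simp_all add: D_def algebra_simps)
  then have "\<bar>t * t * G' (axis j 1) $ i - t * t * G' (axis i 1) $ j\<bar> \<le> 6 * (?\<delta> / 7) * (t * t)"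
    by (simp only: abs_le_iff) linarith
  then have "t * t * ?\<delta> \<le> 6 * (?\<delta> / 7) * (t * t)"
    by (simp add: abs_mult right_diff_distrib[symmetric])
  then show False using t \<delta> by (simp add: mult.commute)
qed

lemma hessian_sym:
  fixes f :: "real^'n \<Rightarrow> real"
  assumes "twice_differentiable_at f x"
  shows "sym_mat (hessian f x)"
proof -
  obtain r where r: "r > 0" and dif: "\<And>y. dist y x < r \<Longrightarrow> f differentiable (at y)"
    using assms unfolding twice_differentiable_at_def eventually_nhds_metric by blast
  have "(grad f has_derivative frechet_derivative (grad f) (at x)) (at x)"
    using assms frechet_derivative_works unfolding twice_differentiable_at_def by blast
  from has_derivative_grad_symmetric[OF r _ this] dif show ?thesis
    unfolding sym_mat_def hessian_def matrix_def transpose_def by (simp add: vec_eq_iff dist_norm)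
qed

section \<open>Ellipticity and the ratio bound\<close>

lemma pos_part_ratio_bound:
  fixes lam Lam p q a :: real
  assumes lam: "0 < lam" "lam \<le> Lam" and pq: "0 \<le> p" "0 \<le> q"
    and hi: "a \<le> Lam * p - lam * q"
  defines "C \<equiv> Lam + (Lam + 1) / lam"
  shows "pos_part a + q \<le> C * (neg_part a + p)"
proof -
  define k where "k = 1 / lam"
  have k: "0 \<le> k" "0 \<le> k * Lam" and C: "C = Lam + k * Lam + k"
    using lam by (auto simp: k_def C_def field_simps)
  have "k * a \<le> k * (Lam * p - lam * q)" using mult_left_mono[OF hi k(1)] .
  also have "\<dots> = k * Lam * p - q" using lam by (simp add: k_def right_diff_distrib)
  finally have q: "q \<le> k * Lam * p - k * a" by simp
  have bounds: "k \<le> C" "k * Lam \<le> C" "Lam + k * Lam \<le> C"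
    using k lam unfolding C by auto
  show ?thesis
  proof (cases "0 \<le> a")
    case True
    have "a \<le> Lam * p" using hi lam pq by (smt (verit) mult_nonneg_nonneg)
    moreover have "0 \<le> k * a" using True k by simp
    ultimately have "a + q \<le> (Lam + k * Lam) * p" using q by (simp add: algebra_simps)
    also have "\<dots> \<le> C * p" using bounds(3) pq(1) by (rule mult_right_mono)
    finally show ?thesis using True by (simp add: pos_part_def neg_part_def)
  next
    case False
    have "q \<le> k * Lam * p + k * (- a)" using q by simp
    also have "\<dots> \<le> C * p + C * (- a)"
      using False pq(1) by (intro add_mono mult_right_mono bounds) auto
    finally show ?thesis using False by (simp add: pos_part_def neg_part_def algebra_simps)
  qed
qed

definition ratio_bounded :: "real \<Rightarrow> real \<Rightarrow> real^'n^'n \<Rightarrow> bool" where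
  "ratio_bounded C a M \<longleftrightarrow>
     (pos_part a + trace (mat_neg M)) / C \<le> neg_part a + trace (mat_pos M) \<and>
     neg_part a + trace (mat_pos M) \<le> C * (pos_part a + trace (mat_neg M))"

text \<open>Writing \<open>X - Y = P - Q\<close> with \<open>P = (X - Y)\<^sub>+\<close> and \<open>Q = (X - Y)\<^sub>-\<close>, both \<open>X\<close> and \<open>Y\<close> are
  obtained from \<open>Y - Q\<close> by adding a positive semidefinite matrix.\<close>
lemma uniformly_elliptic_diff_ratio_bounded:
  fixes F :: "real^'n^'n \<Rightarrow> real"
  assumes lam: "0 < lam" "lam \<le> Lam" and F: "uniformly_elliptic F lam Lam"
    and X: "sym_mat X" and Y: "sym_mat Y"
  shows "ratio_bounded (Lam + (Lam + 1) / lam) (F X - F Y) (X - Y)"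
proof -
  let ?P = "mat_pos (X - Y)" and ?Q = "mat_neg (X - Y)"
  have P: "psd ?P" and Q: "psd ?Q" and XY: "X - Y = ?P - ?Q"
    using pn_decomp_mat_pos_neg[OF sym_mat_diff[OF X Y]] by (auto simp: pn_decomp_def)
  have Z: "sym_mat (Y - ?Q)" using Y Q by (simp add: sym_mat_diff psd_imp_sym_mat)
  have "Y - ?Q + ?P = X" using XY by (simp add: algebra_simps)
  then have "lam * trace ?P \<le> F X - F (Y - ?Q)" "F X - F (Y - ?Q) \<le> Lam * trace ?P"
    using F Z P unfolding uniformly_elliptic_def by metis+
  moreover have "lam * trace ?Q \<le> F Y - F (Y - ?Q)" "F Y - F (Y - ?Q) \<le> Lam * trace ?Q"
    using F Z Q unfolding uniformly_elliptic_def by (metis diff_add_cancel)+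
  ultimately have hi: "F X - F Y \<le> Lam * trace ?P - lam * trace ?Q"
    and hi': "F Y - F X \<le> Lam * trace ?Q - lam * trace ?P"
    by linarith+
  have swap: "pos_part (F Y - F X) = neg_part (F X - F Y)" "neg_part (F Y - F X) = pos_part (F X - F Y)"
    by (simp_all add: pos_part_def neg_part_def)
  note bound = pos_part_ratio_bound[OF lam psd_trace_nonneg[OF P] psd_trace_nonneg[OF Q] hi]
    pos_part_ratio_bound[OF lam psd_trace_nonneg[OF Q] psd_trace_nonneg[OF P] hi', unfolded swap]
  then show ?thesis
    using lam by (simp add: ratio_bounded_def divide_le_eq mult.commute add_pos_nonneg)
qed

lemma ratio_bounded_le_pucci_max:
  fixes M :: "real^'n^'n"
  assumes C: "1 \<le> C" and M: "sym_mat M" and "ratio_bounded C a M"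
  shows "a \<le> pucci_max (1 / C) C M"
proof -
  let ?p = "trace (mat_pos M)" and ?q = "trace (mat_neg M)"
  have pq: "0 \<le> ?p" "0 \<le> ?q" using trace_mat_pos_neg[OF M] by auto
  have "(pos_part a + ?q) / C \<le> neg_part a + ?p"
    using assms(3) by (simp add: ratio_bounded_def)
  moreover from this have "pos_part a + ?q \<le> C * (neg_part a + ?p)"
    using C by (simp add: divide_le_eq mult.commute)
  moreover have "?q / C \<le> ?q" "?p \<le> C * ?p"
    using C pq by (auto simp: divide_le_eq mult_le_cancel_left1 mult_le_cancel_right1)
  ultimately show ?thesis
    unfolding pucci_max_def pos_part_def neg_part_def
    by (cases "0 \<le> a") (simp_all add: algebra_simps)
qed

lemma elliptic_interpolation_iff_ratio_bounded:
  fixes H :: "'a \<Rightarrow> real^'n^'n"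
  assumes sym: "\<And>p. p \<in> S \<Longrightarrow> sym_mat (H p)"
  shows "(\<exists>lam Lam F. 0 < lam \<and> lam \<le> Lam \<and> uniformly_elliptic F lam Lam \<and> (\<forall>p\<in>S. g p = F (H p)))
    \<longleftrightarrow> (\<exists>C\<ge>1. \<forall>p\<in>S. \<forall>q\<in>S. ratio_bounded C (g p - g q) (H p - H q))"
proof
  assume "\<exists>lam Lam F. 0 < lam \<and> lam \<le> Lam \<and> uniformly_elliptic F lam Lam \<and> (\<forall>p\<in>S. g p = F (H p))"
  then obtain lam Lam F where lam: "0 < lam" "lam \<le> Lam" and F: "uniformly_elliptic F lam Lam"
    and g: "\<forall>p\<in>S. g p = F (H p)" by blast
  have "1 \<le> Lam + (Lam + 1) / lam"
    using lam by (simp add: field_simps) (smt (verit) mult_nonneg_nonneg)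
  moreover have "ratio_bounded (Lam + (Lam + 1) / lam) (g p - g q) (H p - H q)" if "p \<in> S" "q \<in> S" for p q
    using uniformly_elliptic_diff_ratio_bounded[OF lam F sym sym] g that by simp
  ultimately show "\<exists>C\<ge>1. \<forall>p\<in>S. \<forall>q\<in>S. ratio_bounded C (g p - g q) (H p - H q)" by blast
next
  assume "\<exists>C\<ge>1. \<forall>p\<in>S. \<forall>q\<in>S. ratio_bounded C (g p - g q) (H p - H q)"
  then obtain C where C: "1 \<le> C" and bounded: "\<forall>p\<in>S. \<forall>q\<in>S. ratio_bounded C (g p - g q) (H p - H q)"
    by blast
  have lam: "0 \<le> 1 / C" "1 / C \<le> C" using C mult_mono[OF C C] by (auto simp: divide_le_eq)
  have "g p - g q \<le> pucci_max (1 / C) C (H p - H q)" if "p \<in> S" "q \<in> S" for p q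
    using ratio_bounded_le_pucci_max[OF C sym_mat_diff[OF sym sym]] bounded that by blast
  then have "\<exists>F. uniformly_elliptic F (1 / C) C \<and> (\<forall>p\<in>S. g p = F (H p))"
    using lam sym by (intro pucci_max_elliptic_extension[where g = g])
  then show "\<exists>lam Lam F. 0 < lam \<and> lam \<le> Lam \<and> uniformly_elliptic F lam Lam \<and> (\<forall>p\<in>S. g p = F (H p))"
    using C lam(2) by (intro exI[of _ "1 / C"] exI[of _ C]) simp
qed

theorem corollary5p2:
  fixes \<Omega> :: "(real \<times> (real^'n)) set"
    and u :: "real \<Rightarrow> real^'n \<Rightarrow> real"
  assumes diff_t: "\<And>t x. (t, x) \<in> \<Omega> \<Longrightarrow> (\<lambda>s. u s x) differentiable (at t)"
    and diff_x: "\<And>t x. (t, x) \<in> \<Omega> \<Longrightarrow> twice_differentiable_at (\<lambda>y. u t y) x"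
  shows "(\<exists>lam Lam (F :: real^'n^'n \<Rightarrow> real).
            0 < lam \<and> lam \<le> Lam \<and> uniformly_elliptic F lam Lam \<and>
            (\<forall>(t, x) \<in> \<Omega>. time_deriv u t x = F (space_hessian u t x)))
    \<longleftrightarrow>
    (\<exists>C::real. 1 \<le> C \<and>
       (\<forall>(t, x) \<in> \<Omega>. \<forall>(s, y) \<in> \<Omega>.
          let a = time_deriv u t x - time_deriv u s y;
              M = space_hessian u t x - space_hessian u s y;
              N = neg_part a + trace (mat_pos M);
              D = pos_part a + trace (mat_neg M)
          in D / C \<le> N \<and> N \<le> C * D))"
proof -
  have "sym_mat (case p of (t, x) \<Rightarrow> space_hessian u t x)" if "p \<in> \<Omega>" for p
    using that diff_x hessian_sym by (auto simp: space_hessian_def split: prod.splits)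
  from elliptic_interpolation_iff_ratio_bounded[where g = "\<lambda>(t, x). time_deriv u t x", OF this]
  show ?thesis
    unfolding Let_def ratio_bounded_def[symmetric] by (simp add: split_beta)
qed

end
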